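(* Let $a>0$. If either ($b\ge a+\frac12$ and $c\ge 2a$) or ($b\ge 2a$ and $c\ge a+\frac12$), subject to the condition $b+c>3a+\frac12$, then $(a,b,c)\in\mathcal{P}_{1,2}$. Moreover: (i) $(a,b,2a)\in\mathcal{P}_{1,2}$ if and only if $b>a+\frac12$, and for every $\delta>0$ and $x>0$, $${}_1F_2\left(a\,;a+\tfrac12+\delta,\,2a\,;-\tfrac{x^2}{4}\right)=\frac{2}{B\left(\delta,a+\frac12\right)}\int_0^1\mathbb{J}_{a-\frac12}^2\left(\frac{xt}{2}\right)(1-t^2)^{\delta-1}t^{2a}\,dt>0.$$ (ii) $(a,a+\frac12,c)\in\mathcal{P}_{1,2}$ if and only if $c>2a$, and for every $\epsilon>0$ and $x>0$, $${}_1F_2\left(a\,;a+\tfrac12,\,2a+\epsilon\,;-\tfrac{x^2}{4}\right)=\frac{2}{B(\epsilon,2a)}\int_0^1\mathbb{J}_{a-\frac12}^2\left(\frac{xt}{2}\right)(1-t^2)^{\epsilon-1}t^{4a-1}\,dt>0.$$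
   Context: For $a,b,c>0$, ${}_1F_2\left(a\,;b,c\,;-\frac{x^2}{4}\right)=\sum_{k=0}^\infty \frac{(a)_k}{k!\,(b)_k(c)_k}\left(-\frac{x^2}{4}\right)^k$, where $(\alpha)_k=\Gamma(\alpha+k)/\Gamma(\alpha)$. $\mathcal{P}_{1,2}$ denotes the set of all triples $(a,b,c)$ of positive reals such that this function is $>0$ for all $x>0$. For $\alpha>-1$, $\mathbb{J}_\alpha(x)={}_0F_1\left(\alpha+1\,;-\frac{x^2}{4}\right)=\Gamma(\alpha+1)(x/2)^{-\alpha}J_\alpha(x)$, with $J_\alpha$ the Bessel function of the first kind. $B$ denotes Euler's beta function. *)

theory Defs
  imports "HOL-Analysis.Analysis"
begin

definition hyp1F2 :: "real \<Rightarrow> real \<Rightarrow> real \<Rightarrow> real \<Rightarrow> real" where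
  "hyp1F2 a b c x =
     (\<Sum>k. pochhammer a k / (fact k * pochhammer b k * pochhammer c k) * (- (x^2) / 4) ^ k)"

text \<open>Normalized Bessel function: J_alpha(x) = 0F1(alpha+1; -x^2/4)
  = Gamma(alpha+1) (x/2)^(-alpha) J_alpha(x).\<close>
definition nBesselJ :: "real \<Rightarrow> real \<Rightarrow> real" where
  "nBesselJ \<alpha> x = (\<Sum>k. (- (x^2) / 4) ^ k / (fact k * pochhammer (\<alpha> + 1) k))"

definition P12 :: "(real \<times> real \<times> real) set" where
  "P12 = {(a, b, c). a > 0 \<and> b > 0 \<and> c > 0 \<and> (\<forall>x>0. hyp1F2 a b c x > 0)}"

end

theory Submission
  imports Defs "HOL-Real_Asymp.Real_Asymp"
begin

text \<open>
  Integrating \<open>\<^sub>1F\<^sub>2(a; b, c; -(xt)\<^sup>2/4)\<close> against \<open>t\<^sup>2\<^sup>b\<^sup>-\<^sup>1 (1 - t\<^sup>2)\<^sup>d\<^sup>-\<^sup>1\<close> over \<open>[0, 1]\<close>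
  gives \<open>B(b, d)/2 \<cdot> \<^sub>1F\<^sub>2(a; b + d, c; -x\<^sup>2/4)\<close>, since \<open>B(b + k, d)/B(b, d) = (b)\<^sub>k/(b + d)\<^sub>k\<close>.
  Hence nonnegativity of \<open>\<^sub>1F\<^sub>2\<close> for \<open>(a, b, c)\<close> implies positivity for \<open>(a, b + d, c)\<close>,
  and by symmetry the same holds for \<open>c\<close>.
  The starting point is Clausen's formula
  \<open>\<^sub>1F\<^sub>2(a; a + 1/2, 2a; -x\<^sup>2/4) = \<bbbJ>\<^sub>a\<^sub>-\<^sub>1\<^sub>/\<^sub>2(x/2)\<^sup>2 \<ge> 0\<close>, proved by comparing coefficients
  of the Cauchy square of the Bessel series. This gives the sufficient conditions and the two
  integral representations. Conversely \<open>\<bbbJ>\<^sub>a\<^sub>-\<^sub>1\<^sub>/\<^sub>2\<close> has a positive zero (Sturm comparison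
  with a sine after the Liouville transformation of Bessel's equation), so
  \<open>(a, a + 1/2, 2a) \<notin> P\<^sub>1\<^sub>,\<^sub>2\<close>; since membership is monotone in \<open>b\<close> and \<open>c\<close>, this forces
  the strict inequalities in (i) and (ii).
\<close>

section \<open>Convergence of the series\<close>

definition hyp1F2_coeff :: "real \<Rightarrow> real \<Rightarrow> real \<Rightarrow> nat \<Rightarrow> real" where
  "hyp1F2_coeff a b c k = pochhammer a k / (fact k * pochhammer b k * pochhammer c k)"

lemma hyp1F2_eq_powser: "hyp1F2 a b c x = (\<Sum>k. hyp1F2_coeff a b c k * (-(x^2)/4)^k)"
  by (simp add: hyp1F2_def hyp1F2_coeff_def)

lemma hyp1F2_commute: "hyp1F2 a b c x = hyp1F2 a c b x"
  by (simp add: hyp1F2_def mult_ac)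

lemma hyp1F2_coeff_pos: "a > 0 \<Longrightarrow> b > 0 \<Longrightarrow> c > 0 \<Longrightarrow> hyp1F2_coeff a b c k > 0"
  by (simp add: hyp1F2_coeff_def pochhammer_pos)

lemma hyp1F2_coeff_Suc:
  assumes "b > 0" "c > 0"
  shows "hyp1F2_coeff a b c (Suc k) = hyp1F2_coeff a b c k * ((a + k) / ((k + 1) * (b + k) * (c + k)))"
proof -
  have "pochhammer b k > 0" "pochhammer c k > 0" "b + k > 0" "c + k > 0"
    using assms by (simp_all add: pochhammer_pos add_pos_nonneg)
  then show ?thesis
    by (simp add: hyp1F2_coeff_def pochhammer_Suc field_simps)
qed

lemma summable_abs_powser_if_ratio_tendsto_0:
  fixes f :: "nat \<Rightarrow> real"
  assumes nz: "\<And>k. f k \<noteq> 0" and lim: "(\<lambda>k. f (Suc k) / f k) \<longlonglongrightarrow> 0"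
  shows "summable (\<lambda>k. \<bar>f k * z ^ k\<bar>)"
proof -
  have "(\<lambda>k. \<bar>f (Suc k) / f k\<bar> * \<bar>z\<bar>) \<longlonglongrightarrow> 0 * \<bar>z\<bar>"
    by (intro tendsto_mult tendsto_rabs_zero lim tendsto_const)
  then have "eventually (\<lambda>k. \<bar>f (Suc k) / f k\<bar> * \<bar>z\<bar> < 1/2) sequentially"
    by (intro order_tendstoD(2)) auto
  then obtain N where N: "\<And>k. k \<ge> N \<Longrightarrow> \<bar>f (Suc k) / f k\<bar> * \<bar>z\<bar> < 1/2"
    by (auto simp: eventually_sequentially)
  show ?thesis
  proof (rule summable_ratio_test[of "1/2" N])
    fix n assume n: "n \<ge> N"
    have "\<bar>f (Suc n) * z^Suc n\<bar> = (\<bar>f (Suc n) / f n\<bar> * \<bar>z\<bar>) * \<bar>f n * z^n\<bar>"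
      using nz[of n] by (simp add: abs_mult abs_divide field_simps)
    also have "\<dots> \<le> 1/2 * \<bar>f n * z^n\<bar>"
      using N[OF n] by (intro mult_right_mono) auto
    finally show "norm \<bar>f (Suc n) * z^Suc n\<bar> \<le> 1/2 * norm \<bar>f n * z^n\<bar>" by simp
  qed simp
qed

lemma summable_abs_hyp1F2_coeff:
  assumes "a > 0" "b > 0" "c > 0"
  shows "summable (\<lambda>k. \<bar>hyp1F2_coeff a b c k * z ^ k\<bar>)"
proof (rule summable_abs_powser_if_ratio_tendsto_0)
  show nz: "hyp1F2_coeff a b c k \<noteq> 0" for k
    using hyp1F2_coeff_pos[OF assms] by (simp add: less_imp_neq[symmetric])
  have "(\<lambda>k::nat. (a + k) / ((k + 1) * (b + k) * (c + k))) \<longlonglongrightarrow> 0"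
    using assms by real_asymp
  then show "(\<lambda>k. hyp1F2_coeff a b c (Suc k) / hyp1F2_coeff a b c k) \<longlonglongrightarrow> 0"
    using nz by (simp add: hyp1F2_coeff_Suc assms)
qed

lemma summable_hyp1F2_coeff:
  "a > 0 \<Longrightarrow> b > 0 \<Longrightarrow> c > 0 \<Longrightarrow> summable (\<lambda>k. hyp1F2_coeff a b c k * z ^ k)"
  by (rule summable_rabs_cancel[OF summable_abs_hyp1F2_coeff])

lemma hyp1F2_0 [simp]: "hyp1F2 a b c 0 = 1"
  using powser_zero[of "hyp1F2_coeff a b c"] by (simp add: hyp1F2_eq_powser hyp1F2_coeff_def)

lemma isCont_hyp1F2:
  assumes "a > 0" "b > 0" "c > 0"
  shows "isCont (hyp1F2 a b c) x"
proof -
  have powser: "isCont (\<lambda>w. \<Sum>k. hyp1F2_coeff a b c k * w^k) w" for w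
    by (rule isCont_powser[where K = "\<bar>w\<bar> + 1"]) (use summable_hyp1F2_coeff[OF assms] in auto)
  have "isCont (\<lambda>x. \<Sum>k. hyp1F2_coeff a b c k * (-(x^2)/4)^k) x"
    by (rule isCont_o2[OF _ powser]) (intro continuous_intros, simp)
  then show ?thesis
    unfolding hyp1F2_eq_powser[abs_def] .
qed

definition bessel_coeff :: "real \<Rightarrow> nat \<Rightarrow> real" where
  "bessel_coeff v k = 1 / (fact k * pochhammer (v + 1) k)"

lemma nBesselJ_eq_powser: "nBesselJ v x = (\<Sum>k. bessel_coeff v k * (-(x^2)/4)^k)"
  by (simp add: nBesselJ_def bessel_coeff_def)

lemma bessel_coeff_pos: "v > -1 \<Longrightarrow> bessel_coeff v k > 0"
  by (simp add: bessel_coeff_def pochhammer_pos)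

lemma bessel_coeff_Suc:
  fixes v :: real
  assumes "v > -1"
  shows "bessel_coeff v (Suc k) * (Suc k * (Suc k + v)) = bessel_coeff v k"
proof -
  define D where "D = fact k * pochhammer (v + 1) k"
  define E where "E = Suc k * (Suc k + v)"
  have "D > 0" "E > 0"
    using assms by (simp_all add: D_def E_def pochhammer_pos)
  moreover have "bessel_coeff v (Suc k) = 1 / (D * E)"
    by (simp add: bessel_coeff_def D_def E_def pochhammer_Suc algebra_simps)
  ultimately have "bessel_coeff v (Suc k) * E = bessel_coeff v k"
    by (simp add: bessel_coeff_def flip: D_def)
  then show ?thesis
    by (simp only: E_def)
qed

lemma summable_abs_bessel_coeff:
  assumes "v > -1"
  shows "summable (\<lambda>k. \<bar>bessel_coeff v k * z ^ k\<bar>)"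
proof (rule summable_abs_powser_if_ratio_tendsto_0)
  show nz: "bessel_coeff v k \<noteq> 0" for k
    using bessel_coeff_pos[OF assms] by (simp add: less_imp_neq[symmetric])
  have "bessel_coeff v (Suc k) / bessel_coeff v k = 1 / (Suc k * (Suc k + v))" for k
    using nz[of "Suc k"] by (simp flip: bessel_coeff_Suc[OF assms, of k])
  moreover have "(\<lambda>k::nat. 1 / (Suc k * (Suc k + v))) \<longlonglongrightarrow> 0"
    by real_asymp
  ultimately show "(\<lambda>k. bessel_coeff v (Suc k) / bessel_coeff v k) \<longlonglongrightarrow> 0"
    by simp
qed

lemma summable_bessel_coeff: "v > -1 \<Longrightarrow> summable (\<lambda>k. bessel_coeff v k * z ^ k)"
  by (rule summable_rabs_cancel[OF summable_abs_bessel_coeff])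

section \<open>Clausen's formula\<close>

lemma sum_atMost_reflect_convolution:
  fixes g u :: "nat \<Rightarrow> real"
  shows "(\<Sum>j\<le>n. g j * (u j * u (n - j))) = (\<Sum>j\<le>n. g (n - j) * (u j * u (n - j)))"
  by (rule sum.reindex_bij_witness[where i = "\<lambda>j. n - j" and j = "\<lambda>j. n - j"]) auto

lemma sum_atMost_shift_convolution:
  fixes g u :: "nat \<Rightarrow> real" and v :: real
  assumes rec: "\<And>j. u (Suc j) * (Suc j * (Suc j + v)) = u j"
  shows "(\<Sum>j\<le>Suc m. j * (j + v) * g j * (u j * u (Suc m - j)))
       = (\<Sum>i\<le>m. g (Suc i) * (u i * u (m - i)))"
proof -
  have "(\<Sum>j\<le>Suc m. j * (j + v) * g j * (u j * u (Suc m - j)))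
      = (\<Sum>i\<le>m. Suc i * (Suc i + v) * g (Suc i) * (u (Suc i) * u (m - i)))"
    by (subst sum.atMost_Suc_shift) simp
  also have "\<dots> = (\<Sum>i\<le>m. g (Suc i) * (u i * u (m - i)))"
    by (intro sum.cong refl) (subst rec[symmetric], simp add: mult_ac)
  finally show ?thesis .
qed

lemma sum_atMost_convolution_first_moment:
  fixes u :: "nat \<Rightarrow> real"
  shows "2 * (\<Sum>j\<le>n. real j * (u j * u (n - j))) = n * (\<Sum>j\<le>n. u j * u (n - j))"
proof -
  have "(\<Sum>j\<le>n. real j * (u j * u (n - j))) = (\<Sum>j\<le>n. real (n - j) * (u j * u (n - j)))"
    by (rule sum_atMost_reflect_convolution)
  also have "\<dots> = (\<Sum>j\<le>n. n * (u j * u (n - j)) - j * (u j * u (n - j)))"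
    by (intro sum.cong refl) (simp add: of_nat_diff algebra_simps)
  also have "\<dots> = n * (\<Sum>j\<le>n. u j * u (n - j)) - (\<Sum>j\<le>n. real j * (u j * u (n - j)))"
    by (simp add: sum_subtractf sum_distrib_left)
  finally show ?thesis
    by simp
qed

text \<open>Weighting the convolution by \<open>1\<close>, \<open>j\<close> and \<open>j (n - j)\<close> and using the recurrence and the
  symmetry \<open>j \<leftrightarrow> n - j\<close> gives enough linear relations to eliminate the first two moments.\<close>

lemma self_convolution_Suc:
  fixes u A :: "nat \<Rightarrow> real" and v :: real
  assumes rec: "\<And>j. u (Suc j) * (Suc j * (Suc j + v)) = u j"
  defines "A \<equiv> \<lambda>n. \<Sum>j\<le>n. u j * u (n - j)"
  shows "A (Suc m) * (Suc m * (Suc m + v) * (Suc m + 2 * v)) = 2 * (2 * m + 2 * v + 1) * A m"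
proof -
  define N where "N = real (Suc m)"
  define P where "P = (\<lambda>n. \<Sum>j\<le>n. real j * (u j * u (n - j)))"
  define Q where "Q = (\<lambda>n. \<Sum>j\<le>n. real j ^ 2 * (u j * u (n - j)))"
  have first_moment: "2 * P n = n * A n" for n
    unfolding P_def A_def by (rule sum_atMost_convolution_first_moment)
  have second_moment: "Q (Suc m) + v * P (Suc m) = A m"
  proof -
    have "Q (Suc m) + v * P (Suc m) = (\<Sum>j\<le>Suc m. j * (j + v) * 1 * (u j * u (Suc m - j)))"
      unfolding Q_def P_def sum_distrib_left sum.distrib[symmetric]
      by (intro sum.cong refl) (simp add: power2_eq_square algebra_simps)
    also have "\<dots> = A m"
      unfolding A_def using sum_atMost_shift_convolution[OF rec, of "\<lambda>_. 1" m] by simp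
    finally show ?thesis .
  qed
  have shifted: "(\<Sum>j\<le>Suc m. j * (j + v) * (N - j) * (u j * u (Suc m - j))) = m * A m / 2"
  proof -
    have "(\<Sum>j\<le>Suc m. j * (j + v) * (N - j) * (u j * u (Suc m - j)))
        = (\<Sum>i\<le>m. real (m - i) * (u i * u (m - i)))"
      using sum_atMost_shift_convolution[OF rec, of "\<lambda>j. N - j" m] by (simp add: N_def)
    also have "\<dots> = P m"
      unfolding P_def by (rule sum_atMost_reflect_convolution[symmetric])
    finally show ?thesis using first_moment[of m] by simp
  qed
  have reflected: "(\<Sum>j\<le>Suc m. j * (N - j) * (N - j + v) * (u j * u (Suc m - j)))
      = (\<Sum>j\<le>Suc m. j * (j + v) * (N - j) * (u j * u (Suc m - j)))"
    by (subst sum_atMost_reflect_convolution)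
       (intro sum.cong refl, auto simp: N_def of_nat_diff algebra_simps)
  have "(N + 2 * v) * (N * P (Suc m) - Q (Suc m))
      = (\<Sum>j\<le>Suc m. (j * (j + v) * (N - j) + j * (N - j) * (N - j + v)) * (u j * u (Suc m - j)))"
    unfolding P_def Q_def sum_distrib_left sum_subtractf[symmetric]
    by (intro sum.cong refl) (simp add: power2_eq_square algebra_simps)
  also have "\<dots> = m * A m"
    unfolding distrib_right sum.distrib reflected shifted by simp
  finally have "(N + 2 * v) * (N * P (Suc m) - Q (Suc m)) = m * A m" .
  moreover have "Q (Suc m) = A m - v * P (Suc m)"
    using second_moment by simp
  ultimately have "(N + 2 * v) * (N + v) * P (Suc m) = (m + N + 2 * v) * A m"
    by (simp add: algebra_simps)
  moreover have "P (Suc m) = N * A (Suc m) / 2"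
    using first_moment[of "Suc m"] by (simp add: N_def)
  ultimately show ?thesis
    by (simp add: N_def field_simps)
qed

lemma bessel_coeff_self_convolution:
  assumes a: "a > 0"
  shows "(\<Sum>j\<le>n. bessel_coeff (a - 1/2) j * bessel_coeff (a - 1/2) (n - j))
       = 4 ^ n * hyp1F2_coeff a (a + 1/2) (2 * a) n"
proof (induction n)
  case 0
  then show ?case by (simp add: bessel_coeff_def hyp1F2_coeff_def)
next
  case (Suc m)
  define S where "S = (\<lambda>n. \<Sum>j\<le>n. bessel_coeff (a - 1/2) j * bessel_coeff (a - 1/2) (n - j))"
  define D where "D = (m + 1) * (a + 1/2 + m) * (2 * a + m)"
  have "D > 0"
    using a by (simp add: D_def add_pos_nonneg)
  have "S (Suc m) * D = 4 * (a + m) * S m"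
    using self_convolution_Suc[OF bessel_coeff_Suc, of "a - 1/2" m] a
    unfolding S_def by (simp add: D_def algebra_simps)
  then have "S (Suc m) = 4 * (a + m) * (4 ^ m * hyp1F2_coeff a (a + 1/2) (2 * a) m) / D"
    using Suc.IH \<open>D > 0\<close> by (simp add: S_def field_simps)
  also have "\<dots> = 4 ^ Suc m * hyp1F2_coeff a (a + 1/2) (2 * a) (Suc m)"
    using hyp1F2_coeff_Suc[of "a + 1/2" "2 * a" a m] a by (simp add: D_def algebra_simps)
  finally show ?case
    unfolding S_def .
qed

lemma hyp1F2_eq_nBesselJ_sq:
  assumes a: "a > 0"
  shows "hyp1F2 a (a + 1/2) (2 * a) x = (nBesselJ (a - 1/2) (x / 2))\<^sup>2"
proof -
  define v where "v = a - 1/2"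
  define w where "w = -((x / 2)^2) / 4"
  have v: "v > -1" using a by (simp add: v_def)
  have summable: "summable (\<lambda>k. norm (bessel_coeff v k * w^k))"
    using summable_abs_bessel_coeff[OF v] by simp
  have "(nBesselJ v (x / 2))\<^sup>2 = (\<Sum>k. bessel_coeff v k * w^k) * (\<Sum>k. bessel_coeff v k * w^k)"
    by (simp add: nBesselJ_eq_powser w_def power2_eq_square)
  also have "\<dots> = (\<Sum>n. \<Sum>i\<le>n. (bessel_coeff v i * w^i) * (bessel_coeff v (n - i) * w^(n - i)))"
    by (rule Cauchy_product[OF summable summable])
  also have "\<dots> = (\<Sum>n. hyp1F2_coeff a (a + 1/2) (2 * a) n * (-(x^2)/4)^n)"
  proof (rule suminf_cong)
    fix n
    have "(\<Sum>i\<le>n. (bessel_coeff v i * w^i) * (bessel_coeff v (n - i) * w^(n - i)))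
        = (\<Sum>i\<le>n. bessel_coeff v i * bessel_coeff v (n - i)) * w^n"
      unfolding sum_distrib_right
      by (intro sum.cong refl) (simp add: mult_ac flip: power_add)
    also have "\<dots> = hyp1F2_coeff a (a + 1/2) (2 * a) n * (4 * w)^n"
      by (simp add: bessel_coeff_self_convolution[OF a] v_def power_mult_distrib)
    finally show "(\<Sum>i\<le>n. (bessel_coeff v i * w^i) * (bessel_coeff v (n - i) * w^(n - i)))
        = hyp1F2_coeff a (a + 1/2) (2 * a) n * (-(x^2)/4)^n"
      by (simp add: w_def power_divide)
  qed
  finally show ?thesis
    by (simp add: hyp1F2_eq_powser v_def)
qed

section \<open>Raising a denominator parameter by a Beta integral\<close>

definition beta_kernel :: "real \<Rightarrow> real \<Rightarrow> real \<Rightarrow> real" where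
  "beta_kernel b d t = t powr (2 * b - 1) * (1 - t\<^sup>2) powr (d - 1) * indicator {0..1} t"

lemma beta_kernel_nonneg: "beta_kernel b d t \<ge> 0"
  by (simp add: beta_kernel_def indicator_def)

lemma beta_kernel_pos:
  assumes "0 < t" "t < 1"
  shows "beta_kernel b d t > 0"
proof -
  have "t\<^sup>2 < 1"
    using assms by (simp add: power_less_one_iff)
  with assms show ?thesis
    by (simp add: beta_kernel_def)
qed

lemma power_mult_beta_kernel: "t ^ (2 * k) * beta_kernel b d t = beta_kernel (b + k) d t"
proof (cases "0 < t \<and> t \<le> 1")
  case True
  then have "t ^ (2 * k) * t powr (2 * b - 1) = t powr (real (2 * k) + (2 * b - 1))"
    using powr_realpow[of t "2 * k"] by (simp add: powr_add)
  also have "real (2 * k) + (2 * b - 1) = 2 * (b + k) - 1"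
    by simp
  finally have "t ^ (2 * k) * t powr (2 * b - 1) = t powr (2 * (b + k) - 1)" .
  then show ?thesis
    by (simp add: beta_kernel_def mult_ac)
qed (auto simp: beta_kernel_def indicator_def)

lemma power2_powr_mult_double:
  fixes t b :: real
  assumes "t > 0"
  shows "(t\<^sup>2) powr (b - 1) * (2 * t) = 2 * t powr (2 * b - 1)"
proof -
  have "(t\<^sup>2) powr (b - 1) = t powr (2 * (b - 1))"
    using assms by (simp add: powr_powr flip: powr_numeral)
  moreover have "t * t powr (2 * (b - 1)) = t powr (1 + 2 * (b - 1))"
    using assms by (intro powr_mult_base) simp
  ultimately show ?thesis
    by (simp add: algebra_simps)
qed

text \<open>Substituting \<open>u = t\<^sup>2\<close> in Euler's integral for \<open>B(b, d)\<close>.\<close>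

lemma nn_integral_beta_kernel:
  assumes "b > 0" "d > 0"
  shows "(\<integral>\<^sup>+t. beta_kernel b d t \<partial>lborel) = ennreal (Beta b d / 2)"
proof -
  have "ennreal (Beta b d) = (\<integral>\<^sup>+u. ennreal (u powr (b - 1) * (1 - u) powr (d - 1) * indicator {0^2..1^2} u) \<partial>lborel)"
    using nn_integral_has_integral_lebesgue[OF _ has_integral_Beta_real[OF assms]]
    by (simp add: mult_ac ennreal_mult' ennreal_indicator)
  also have "\<dots> = (\<integral>\<^sup>+t. ennreal ((t\<^sup>2) powr (b - 1) * (1 - t\<^sup>2) powr (d - 1) * (2 * t) * indicator {0..1} t) \<partial>lborel)"
    by (subst nn_integral_substitution[where g = "\<lambda>t. t\<^sup>2" and g' = "\<lambda>t. 2 * t"])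
       (auto intro!: derivative_eq_intros continuous_intros simp: set_borel_measurable_def)
  also have "\<dots> = (\<integral>\<^sup>+t. 2 * ennreal (beta_kernel b d t) \<partial>lborel)"
  proof (intro nn_integral_cong)
    fix t :: real
    show "ennreal ((t\<^sup>2) powr (b - 1) * (1 - t\<^sup>2) powr (d - 1) * (2 * t) * indicator {0..1} t)
        = 2 * ennreal (beta_kernel b d t)"
    proof (cases "0 < t \<and> t \<le> 1")
      case True
      then have integrand: "(t\<^sup>2) powr (b - 1) * (1 - t\<^sup>2) powr (d - 1) * (2 * t) * indicator {0..1} t
          = 2 * beta_kernel b d t"
        using power2_powr_mult_double[of t b] by (simp add: beta_kernel_def mult_ac)
      show ?thesis
        unfolding integrand by (simp add: ennreal_mult')
    qed (auto simp: beta_kernel_def indicator_def)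
  qed
  also have "\<dots> = 2 * (\<integral>\<^sup>+t. beta_kernel b d t \<partial>lborel)"
    by (simp add: nn_integral_cmult beta_kernel_def)
  finally show ?thesis
    using ennreal_mult'[of 2 "Beta b d / 2"] ennreal_mult_cancel_left[of 2] by simp
qed

lemma has_bochner_integral_beta_kernel:
  assumes "b > 0" "d > 0"
  shows "has_bochner_integral lborel (beta_kernel b d) (Beta b d / 2)"
proof (rule has_bochner_integral_nn_integral)
  show "beta_kernel b d \<in> borel_measurable lborel"
    unfolding beta_kernel_def by measurable
  show "0 \<le> Beta b d / 2"
    using assms by (simp add: Beta_def less_imp_le)
qed (simp_all add: beta_kernel_nonneg nn_integral_beta_kernel[OF assms])

lemma Beta_pos_real: "x > 0 \<Longrightarrow> y > 0 \<Longrightarrow> Beta x y > (0::real)"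
  by (simp add: Beta_def)

lemma hyp1F2_coeff_mult_Beta:
  assumes "b > 0" "c > 0" "d > 0"
  shows "hyp1F2_coeff a b c k * Beta (b + k) d = hyp1F2_coeff a (b + d) c k * Beta b d"
proof -
  have "b \<notin> \<int>\<^sub>\<le>\<^sub>0" "b + d \<notin> \<int>\<^sub>\<le>\<^sub>0"
    using assms by (auto dest: nonpos_Ints_nonpos)
  then have pochhammer_eq: "pochhammer b k = Gamma (b + k) / Gamma b"
    "pochhammer (b + d) k = Gamma (b + d + k) / Gamma (b + d)"
    by (simp_all add: pochhammer_Gamma)
  have "Gamma b > 0" "Gamma (b + k) > 0" "Gamma d > 0" "Gamma (b + d) > 0"
    "Gamma (b + d + k) > 0" "pochhammer c k > 0"
    using assms by (simp_all add: pochhammer_pos add_pos_nonneg)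
  moreover have "b + k + d = b + d + k"
    by simp
  ultimately show ?thesis
    unfolding hyp1F2_coeff_def Beta_def pochhammer_eq by (simp add: field_simps)
qed

lemma beta_kernel_le:
  fixes b d t :: real and k :: nat
  shows "beta_kernel (b + k) d t \<le> beta_kernel b d t"
proof (cases "t \<in> {0..1}")
  case True
  then have "t ^ (2 * k) \<le> 1"
    by (simp add: power_le_one)
  then show ?thesis
    unfolding power_mult_beta_kernel[symmetric] using beta_kernel_nonneg[of b d t]
    by (simp add: mult_left_le_one_le)
qed (simp add: beta_kernel_def)

lemma hyp1F2_scaled_mult_beta_kernel_sums:
  assumes "a > 0" "b > 0" "c > 0"
  shows "(\<lambda>k. hyp1F2_coeff a b c k * (-(x^2)/4)^k * beta_kernel (b + k) d t)
           sums (hyp1F2 a b c (x * t) * beta_kernel b d t)"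
proof -
  have "-((x * t)^2)/4 = -(x^2)/4 * t^2"
    by (simp add: power_mult_distrib)
  then have "(\<lambda>k. hyp1F2_coeff a b c k * (-(x^2)/4 * t^2)^k) sums hyp1F2 a b c (x * t)"
    using summable_sums[OF summable_hyp1F2_coeff[OF assms]] by (simp add: hyp1F2_eq_powser)
  then have sums: "(\<lambda>k. hyp1F2_coeff a b c k * (-(x^2)/4 * t^2)^k * beta_kernel b d t)
      sums (hyp1F2 a b c (x * t) * beta_kernel b d t)"
    by (rule sums_mult2)
  have term_eq: "hyp1F2_coeff a b c k * (-(x^2)/4 * t^2)^k * beta_kernel b d t
      = hyp1F2_coeff a b c k * (-(x^2)/4)^k * beta_kernel (b + k) d t" for k :: nat
    by (simp only: power_mult_distrib power_mult[symmetric] mult.assoc flip: power_mult_beta_kernel)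
  show ?thesis
    using sums unfolding term_eq .
qed

lemma hyp1F2_raise_integral:
  assumes a: "a > 0" and b: "b > 0" and c: "c > 0" and d: "d > 0"
  shows "integrable lborel (\<lambda>t. hyp1F2 a b c (x * t) * beta_kernel b d t)"
    and "(\<integral>t. hyp1F2 a b c (x * t) * beta_kernel b d t \<partial>lborel) = Beta b d / 2 * hyp1F2 a (b + d) c x"
proof -
  define z where "z = -(x^2)/4"
  define F where "F = (\<lambda>k t. hyp1F2_coeff a b c k * z^k * beta_kernel (b + k) d t)"
  have bk: "b + k > 0" for k :: nat
    using b by (simp add: add_pos_nonneg)
  have coeff_Beta: "hyp1F2_coeff a b c k * z^k * (Beta (b + k) d / 2)
      = hyp1F2_coeff a (b + d) c k * z^k * (Beta b d / 2)" for k :: nat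
    using hyp1F2_coeff_mult_Beta[OF b c d, of a k] by (simp add: mult_ac)
  have has_integral_F: "has_bochner_integral lborel (F k) (hyp1F2_coeff a (b + d) c k * z^k * (Beta b d / 2))"
    for k :: nat
    unfolding F_def coeff_Beta[symmetric]
    by (intro has_bochner_integral_mult_right has_bochner_integral_beta_kernel bk d)
  have norm_F: "norm (F k t) = \<bar>hyp1F2_coeff a b c k * z^k\<bar> * beta_kernel (b + k) d t" for k :: nat and t
    by (simp add: F_def abs_mult beta_kernel_nonneg)
  have "(\<integral>t. norm (F k t) \<partial>lborel) = \<bar>hyp1F2_coeff a b c k * z^k\<bar> * (Beta (b + k) d / 2)" for k :: nat
    unfolding norm_F
    by (intro has_bochner_integral_integral_eq has_bochner_integral_mult_right has_bochner_integral_beta_kernel bk d)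
  also have "\<bar>hyp1F2_coeff a b c k * z^k\<bar> * (Beta (b + k) d / 2) = \<bar>hyp1F2_coeff a (b + d) c k * z^k\<bar> * (Beta b d / 2)"
    for k :: nat
    using coeff_Beta[of k] Beta_pos_real[OF bk[of k] d] Beta_pos_real[OF b d]
    by (metis abs_mult abs_of_pos half_gt_zero)
  finally have "summable (\<lambda>k. \<integral>t. norm (F k t) \<partial>lborel)"
    using a b c d by (simp only:) (intro summable_mult2 summable_abs_hyp1F2_coeff, auto)
  moreover have "AE t in lborel. summable (\<lambda>k. norm (F k t))"
  proof (rule AE_I2, rule summable_comparison_test'[where N = 0])
    show "summable (\<lambda>k. \<bar>hyp1F2_coeff a b c k * z^k\<bar> * beta_kernel b d t)" for t
      by (intro summable_mult2 summable_abs_hyp1F2_coeff a b c)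
    show "norm (norm (F k t)) \<le> \<bar>hyp1F2_coeff a b c k * z^k\<bar> * beta_kernel b d t" for k t
      unfolding norm_F by (simp add: abs_mult beta_kernel_nonneg beta_kernel_le mult_left_mono)
  qed
  moreover have "(\<lambda>t. hyp1F2 a b c (x * t) * beta_kernel b d t) = (\<lambda>t. \<Sum>k. F k t)"
    using sums_unique[OF hyp1F2_scaled_mult_beta_kernel_sums[OF a b c]] by (simp add: F_def z_def)
  moreover have "(\<Sum>k. hyp1F2_coeff a (b + d) c k * z^k * (Beta b d / 2)) = Beta b d / 2 * hyp1F2 a (b + d) c x"
    using suminf_mult2[OF summable_hyp1F2_coeff[of a "b + d" c z]] a b c d
    by (simp add: hyp1F2_eq_powser z_def mult_ac)
  ultimately show "integrable lborel (\<lambda>t. hyp1F2 a b c (x * t) * beta_kernel b d t)"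
    and "(\<integral>t. hyp1F2 a b c (x * t) * beta_kernel b d t \<partial>lborel) = Beta b d / 2 * hyp1F2 a (b + d) c x"
    using integrable_suminf[OF integrable.intros[OF has_integral_F]]
      integral_suminf[OF integrable.intros[OF has_integral_F]]
    by (simp_all add: has_bochner_integral_integral_eq[OF has_integral_F])
qed

lemma integral_pos_if_pos_on_interval:
  fixes f :: "real \<Rightarrow> real"
  assumes "integrable lborel f" "\<And>t. f t \<ge> 0" "l < u" "\<And>t. t \<in> {l<..<u} \<Longrightarrow> f t > 0"
  shows "integral\<^sup>L lborel f > 0"
proof (rule ccontr)
  assume "\<not> integral\<^sup>L lborel f > 0"
  moreover have "integral\<^sup>L lborel f \<ge> 0"
    using assms(2) by (simp add: integral_nonneg_AE)
  ultimately have "AE t in lborel. f t = 0"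
    using integral_nonneg_eq_0_iff_AE[OF assms(1)] assms(2) by simp
  then have "AE t in lborel. t \<notin> {l<..<u}"
    by eventually_elim (use assms(4) in fastforce)
  then have "emeasure lborel {l<..<u} = 0"
    by (subst (asm) AE_iff_measurable[of "{l<..<u}"]) auto
  with \<open>l < u\<close> show False
    by simp
qed

text \<open>Strict positivity comes from small \<open>t\<close>, where \<open>\<^sub>1F\<^sub>2(a; b, c; -(xt)\<^sup>2/4)\<close> is close to \<open>1\<close>.\<close>

lemma hyp1F2_raise_pos:
  assumes a: "a > 0" and b: "b > 0" and c: "c > 0" and d: "d > 0"
    and nonneg: "\<And>t. 0 \<le> t \<Longrightarrow> t \<le> 1 \<Longrightarrow> hyp1F2 a b c (x * t) \<ge> 0"
  shows "hyp1F2 a (b + d) c x > 0"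
proof -
  define f where "f = (\<lambda>t. hyp1F2 a b c (x * t) * beta_kernel b d t)"
  have "isCont (\<lambda>t. hyp1F2 a b c (x * t)) 0"
    by (rule isCont_o2[OF _ isCont_hyp1F2[OF a b c]]) (intro continuous_intros)
  then have "((\<lambda>t. hyp1F2 a b c (x * t)) \<longlongrightarrow> 1) (at 0)"
    by (simp add: isCont_def)
  then have "eventually (\<lambda>t. hyp1F2 a b c (x * t) > 0) (at 0)"
    by (rule order_tendstoD) simp
  then obtain \<eta> where "\<eta> > 0" and \<eta>: "\<And>t. t \<noteq> 0 \<Longrightarrow> dist t 0 < \<eta> \<Longrightarrow> hyp1F2 a b c (x * t) > 0"
    unfolding eventually_at by blast
  have "integral\<^sup>L lborel f > 0"
  proof (rule integral_pos_if_pos_on_interval)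
    show "integrable lborel f"
      unfolding f_def by (rule hyp1F2_raise_integral(1)[OF a b c d])
    show "f t \<ge> 0" for t
      using nonneg[of t] beta_kernel_nonneg[of b d t]
      by (cases "t \<in> {0..1}") (auto simp: f_def beta_kernel_def)
    show "0 < min \<eta> 1"
      using \<open>\<eta> > 0\<close> by simp
    show "f t > 0" if "t \<in> {0<..<min \<eta> 1}" for t
      using that \<eta>[of t] beta_kernel_pos[of t b d] by (simp add: f_def)
  qed
  then show ?thesis
    using hyp1F2_raise_integral(2)[OF a b c d] Beta_pos_real[OF b d]
    by (simp add: f_def zero_less_mult_iff)
qed

lemma LBINT_eq_integral_beta_kernel:
  "(LBINT t=0..1. g t * (1 - t\<^sup>2) powr (d - 1) * t powr (2 * b - 1))
     = (\<integral>t. g t * beta_kernel b d t \<partial>lborel)"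
proof -
  have "(LBINT t=0..1. g t * (1 - t\<^sup>2) powr (d - 1) * t powr (2 * b - 1))
      = (LBINT t:{0..1}. g t * (1 - t\<^sup>2) powr (d - 1) * t powr (2 * b - 1))"
    unfolding zero_ereal_def one_ereal_def by (rule interval_integral_Icc) simp
  also have "\<dots> = (\<integral>t. g t * beta_kernel b d t \<partial>lborel)"
    unfolding set_lebesgue_integral_def beta_kernel_def
    by (intro Bochner_Integration.integral_cong) (auto simp: indicator_def)
  finally show ?thesis .
qed

lemma hyp1F2_raise_LBINT:
  assumes "a > 0" "b > 0" "c > 0" "d > 0"
  shows "(LBINT t=0..1. hyp1F2 a b c (x * t) * (1 - t^2) powr (d - 1) * t powr (2 * b - 1))
       = Beta b d / 2 * hyp1F2 a (b + d) c x"
  using hyp1F2_raise_integral(2)[OF assms] by (simp add: LBINT_eq_integral_beta_kernel)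

section \<open>A positive zero of the Bessel function\<close>

text \<open>Sturm comparison with \<open>sin ((x - X)/2)\<close>, a solution of \<open>s'' = - s/4\<close> vanishing at both
  ends of \<open>[X, X + 2\<pi>]\<close>: the Wronskian \<open>w' s - w s'\<close> would have to decrease across the
  interval, but it goes from \<open>-w(X)/2\<close> to \<open>w(X + 2\<pi>)/2\<close>.\<close>

lemma sturm_comparison_sin:
  fixes w w' q :: "real \<Rightarrow> real"
  assumes w: "\<And>x. x \<in> {X..X + 2 * pi} \<Longrightarrow> (w has_real_derivative w' x) (at x)"
    and w': "\<And>x. x \<in> {X..X + 2 * pi} \<Longrightarrow> (w' has_real_derivative - q x * w x) (at x)"
    and q: "\<And>x. x \<in> {X..X + 2 * pi} \<Longrightarrow> q x \<ge> 1/4"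
  shows "\<exists>x\<in>{X..X + 2 * pi}. w x \<le> 0"
proof (rule ccontr)
  assume "\<not> (\<exists>x\<in>{X..X + 2 * pi}. w x \<le> 0)"
  then have w_pos: "x \<in> {X..X + 2 * pi} \<Longrightarrow> w x > 0" for x
    by force
  define s where "s = (\<lambda>x. sin ((x - X) / 2))"
  define s' where "s' = (\<lambda>x. cos ((x - X) / 2) / 2)"
  define W where "W = (\<lambda>x. w' x * s x - w x * s' x)"
  have "W (X + 2 * pi) \<le> W X"
  proof (rule DERIV_nonpos_imp_nonincreasing[where f = W])
    fix x assume "X \<le> x" "x \<le> X + 2 * pi"
    then have x: "x \<in> {X..X + 2 * pi}" and "s x \<ge> 0"
      unfolding s_def by (auto intro!: sin_ge_zero)
    have "(s has_real_derivative s' x) (at x)" "(s' has_real_derivative - s x / 4) (at x)"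
      unfolding s_def s'_def by (auto intro!: derivative_eq_intros)
    from DERIV_diff[OF DERIV_mult[OF w'[OF x] this(1)] DERIV_mult[OF w[OF x] this(2)]]
    have "(W has_real_derivative w x * s x * (1/4 - q x)) (at x)"
      unfolding W_def by (simp add: algebra_simps)
    moreover have "w x * s x * (1/4 - q x) \<le> 0"
      using w_pos[OF x] \<open>s x \<ge> 0\<close> q[OF x] by (intro mult_nonneg_nonpos) auto
    ultimately show "\<exists>y. (W has_real_derivative y) (at x) \<and> y \<le> 0"
      by blast
  qed simp
  moreover have "W X < 0" "W (X + 2 * pi) > 0"
    using w_pos[of X] w_pos[of "X + 2 * pi"] by (simp_all add: W_def s_def s'_def)
  ultimately show False
    by simp
qed

text \<open>The Liouville substitution \<open>w = x\<^sup>m y\<close> turns \<open>y'' + (2m/x) y' + y = 0\<close> into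
  \<open>w'' = - (1 - (m\<^sup>2 - m)/x\<^sup>2) w\<close>, to which the comparison above applies far out.\<close>

lemma bessel_type_ode_has_nonpos_value:
  fixes y y' y'' :: "real \<Rightarrow> real" and m :: real
  assumes y: "\<And>x. x > 0 \<Longrightarrow> (y has_real_derivative y' x) (at x)"
    and y': "\<And>x. x > 0 \<Longrightarrow> (y' has_real_derivative y'' x) (at x)"
    and ode: "\<And>x. x > 0 \<Longrightarrow> y'' x = - y x - (2 * m / x) * y' x"
  shows "\<exists>x>0. y x \<le> 0"
proof -
  define c where "c = m * m - m"
  define X where "X = 2 * \<bar>c\<bar> + 1"
  define w where "w = (\<lambda>x. x powr m * y x)"
  define w' where "w' = (\<lambda>x. x powr m * (m / x * y x + y' x))"
  have interval_pos: "x \<in> {X..X + 2 * pi} \<Longrightarrow> x > 0" for x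
    unfolding X_def by auto
  have "\<exists>x\<in>{X..X + 2 * pi}. w x \<le> 0"
  proof (rule sturm_comparison_sin)
    fix x assume x: "x \<in> {X..X + 2 * pi}"
    then have "x > 0"
      by (rule interval_pos)
    show "(w has_real_derivative w' x) (at x)"
      unfolding w_def w'_def using \<open>x > 0\<close>
      by (auto intro!: derivative_eq_intros y simp: powr_diff field_simps)
    show "(w' has_real_derivative - (1 - c / x^2) * w x) (at x)"
      unfolding w_def w'_def using \<open>x > 0\<close>
      by (auto intro!: derivative_eq_intros y y' simp: ode powr_diff c_def field_simps power2_eq_square)
    have "x \<ge> 1" "x > 2 * \<bar>c\<bar>"
      using x by (auto simp: X_def)
    then have "x * 1 \<le> x * x"
      by (intro mult_left_mono) auto
    with \<open>x > 2 * \<bar>c\<bar>\<close> have "x\<^sup>2 > 2 * \<bar>c\<bar>"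
      by (simp add: power2_eq_square)
    then have "c / x\<^sup>2 \<le> 1/2"
      using abs_ge_self[of c] by (simp add: divide_le_eq)
    then show "1 - c / x\<^sup>2 \<ge> 1/4"
      by linarith
  qed
  then obtain x where "x > 0" "w x \<le> 0"
    using interval_pos by blast
  then show ?thesis
    by (auto simp: w_def zero_le_mult_iff mult_le_0_iff)
qed

lemma bessel_coeff_powser_ode:
  fixes v w :: real
  assumes v: "v > -1"
  shows "w * (\<Sum>n. diffs (diffs (bessel_coeff v)) n * w^n) + (v + 1) * (\<Sum>n. diffs (bessel_coeff v) n * w^n)
       = (\<Sum>n. bessel_coeff v n * w^n)"
proof -
  define c where "c = bessel_coeff v"
  have S0: "summable (\<lambda>n. c n * z^n)" for z
    unfolding c_def by (rule summable_bessel_coeff[OF v])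
  have S1: "summable (\<lambda>n. diffs c n * z^n)" for z
    by (rule termdiff_converges_all[OF S0])
  have S2: "summable (\<lambda>n. diffs (diffs c) n * z^n)" for z
    by (rule termdiff_converges_all[OF S1])
  define h where "h = (\<lambda>n. n * Suc n * c (Suc n) * w^n)"
  have h_Suc: "h (Suc n) = w * (diffs (diffs c) n * w^n)" for n
    by (simp add: h_def diffs_def algebra_simps)
  have "summable (\<lambda>n. h (Suc n))"
    unfolding h_Suc by (rule summable_mult[OF S2])
  then have summable_h: "summable h"
    by (simp add: summable_Suc_iff)
  have "w * (\<Sum>n. diffs (diffs c) n * w^n) = (\<Sum>n. h (Suc n))"
    unfolding h_Suc by (rule suminf_mult[OF S2, symmetric])
  also have "\<dots> = suminf h"
    using suminf_split_head[OF summable_h] by (simp add: h_def)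
  finally have "w * (\<Sum>n. diffs (diffs c) n * w^n) + (v + 1) * (\<Sum>n. diffs c n * w^n)
      = suminf h + (\<Sum>n. (v + 1) * (diffs c n * w^n))"
    by (simp add: suminf_mult[OF S1])
  also have "\<dots> = (\<Sum>n. h n + (v + 1) * (diffs c n * w^n))"
    by (rule suminf_add[OF summable_h summable_mult[OF S1]])
  also have "\<dots> = (\<Sum>n. c n * w^n)"
  proof (rule suminf_cong)
    fix n
    have "h n + (v + 1) * (diffs c n * w^n) = c (Suc n) * (Suc n * (Suc n + v)) * w^n"
      by (simp add: h_def diffs_def algebra_simps)
    also have "\<dots> = c n * w^n"
      unfolding c_def bessel_coeff_Suc[OF v] ..
    finally show "h n + (v + 1) * (diffs c n * w^n) = c n * w^n" .
  qed
  finally show ?thesis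
    unfolding c_def .
qed

lemma nBesselJ_ode:
  fixes v :: real
  assumes v: "v > -1"
  obtains J' J'' where "\<And>x. (nBesselJ v has_real_derivative J' x) (at x)"
    and "\<And>x. (J' has_real_derivative J'' x) (at x)"
    and "\<And>x. x > 0 \<Longrightarrow> J'' x = - nBesselJ v x - (2 * (v + 1/2) / x) * J' x"
proof -
  define c where "c = bessel_coeff v"
  have S0: "summable (\<lambda>n. c n * z^n)" for z
    unfolding c_def by (rule summable_bessel_coeff[OF v])
  have S1: "summable (\<lambda>n. diffs c n * z^n)" for z
    by (rule termdiff_converges_all[OF S0])
  define G0 where "G0 = (\<lambda>w::real. \<Sum>n. c n * w^n)"
  define G1 where "G1 = (\<lambda>w::real. \<Sum>n. diffs c n * w^n)"
  define G2 where "G2 = (\<lambda>w::real. \<Sum>n. diffs (diffs c) n * w^n)"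
  have G0: "(G0 has_real_derivative G1 w) (at w)" for w
    unfolding G0_def G1_def by (rule termdiffs_strong_converges_everywhere[OF S0])
  have G1: "(G1 has_real_derivative G2 w) (at w)" for w
    unfolding G1_def G2_def by (rule termdiffs_strong_converges_everywhere[OF S1])
  define q where "q = (\<lambda>x::real. -(x^2)/4)"
  have q: "(q has_real_derivative -(x/2)) (at x)" for x
    unfolding q_def by (auto intro!: derivative_eq_intros)
  have J: "nBesselJ v = (\<lambda>x. G0 (q x))"
    by (simp add: fun_eq_iff nBesselJ_eq_powser G0_def q_def c_def)
  show thesis
  proof
    show "(nBesselJ v has_real_derivative G1 (q x) * -(x/2)) (at x)" for x
      unfolding J by (rule DERIV_chain2[OF G0 q])
    show "((\<lambda>x. G1 (q x) * -(x/2)) has_real_derivative G2 (q x) * -(x/2) * -(x/2) + -(1/2) * G1 (q x)) (at x)" for x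
      by (rule DERIV_mult[OF DERIV_chain2[OF G1 q]]) (auto intro!: derivative_eq_intros)
    show "G2 (q x) * -(x/2) * -(x/2) + -(1/2) * G1 (q x)
        = - nBesselJ v x - (2 * (v + 1/2) / x) * (G1 (q x) * -(x/2))" if "x > 0" for x
    proof -
      have "q x * G2 (q x) + (v + 1) * G1 (q x) = G0 (q x)"
        unfolding G0_def G1_def G2_def c_def by (rule bessel_coeff_powser_ode[OF v])
      with that show ?thesis
        by (simp add: J q_def field_simps, algebra)
    qed
  qed
qed

lemma nBesselJ_has_positive_zero:
  assumes "v > -1"
  shows "\<exists>z>0. nBesselJ v z = 0"
proof -
  obtain J' J'' where J: "\<And>x. (nBesselJ v has_real_derivative J' x) (at x)"
    and J': "\<And>x. (J' has_real_derivative J'' x) (at x)"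
    and ode: "\<And>x. x > 0 \<Longrightarrow> J'' x = - nBesselJ v x - (2 * (v + 1/2) / x) * J' x"
    using nBesselJ_ode[OF assms] by blast
  obtain x where "x > 0" "nBesselJ v x \<le> 0"
    using bessel_type_ode_has_nonpos_value[OF J J' ode] by blast
  moreover have "nBesselJ v 0 = 1"
    using powser_zero[of "bessel_coeff v"] by (simp add: nBesselJ_eq_powser bessel_coeff_def)
  moreover have "continuous_on {0..x} (nBesselJ v)"
    by (intro continuous_at_imp_continuous_on ballI DERIV_isCont[OF J])
  ultimately obtain z where "0 \<le> z" "z \<le> x" "nBesselJ v z = 0"
    using IVT2'[of "nBesselJ v" x 0 0] by auto
  with \<open>nBesselJ v 0 = 1\<close> show ?thesis
    by (metis less_eq_real_def zero_neq_one)
qed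

section \<open>The positivity region\<close>

lemma hyp1F2_Clausen_nonneg: "a > 0 \<Longrightarrow> hyp1F2 a (a + 1/2) (2 * a) x \<ge> 0"
  by (simp add: hyp1F2_eq_nBesselJ_sq)

lemma hyp1F2_Clausen_has_positive_zero:
  assumes "a > 0"
  shows "\<exists>x>0. hyp1F2 a (a + 1/2) (2 * a) x = 0"
proof -
  obtain z where "z > 0" "nBesselJ (a - 1/2) z = 0"
    using nBesselJ_has_positive_zero[of "a - 1/2"] assms by auto
  then show ?thesis
    using hyp1F2_eq_nBesselJ_sq[OF assms, of "2 * z"] by (intro exI[of _ "2 * z"]) simp
qed

lemma P12_commute: "(a, b, c) \<in> P12 \<longleftrightarrow> (a, c, b) \<in> P12"
  by (auto simp: P12_def hyp1F2_commute)

lemma mem_P12_if_raised: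
  assumes "a > 0" "b > 0" "c > 0" and nonneg: "\<And>x. x > 0 \<Longrightarrow> hyp1F2 a b c x \<ge> 0" and "b < b'"
  shows "(a, b', c) \<in> P12"
proof -
  have "hyp1F2 a (b + (b' - b)) c x > 0" if "x > 0" for x
  proof (rule hyp1F2_raise_pos)
    show "hyp1F2 a b c (x * t) \<ge> 0" if "0 \<le> t" for t
      using nonneg[of "x * t"] \<open>x > 0\<close> that by (cases "t = 0") auto
  qed (use assms in auto)
  with assms show ?thesis
    by (simp add: P12_def)
qed

lemma P12_mono:
  assumes "(a, b, c) \<in> P12" "b \<le> b'"
  shows "(a, b', c) \<in> P12"
proof (cases "b = b'")
  case False
  with assms show ?thesis
    by (intro mem_P12_if_raised[where b = b]) (auto simp: P12_def less_imp_le)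
qed (use assms in simp)

lemma Clausen_not_mem_P12: "a > 0 \<Longrightarrow> (a, a + 1/2, 2 * a) \<notin> P12"
  using hyp1F2_Clausen_has_positive_zero by (force simp: P12_def)

lemma mem_P12_b_2a_iff:
  assumes "a > 0"
  shows "(a, b, 2 * a) \<in> P12 \<longleftrightarrow> b > a + 1/2"
proof
  assume "(a, b, 2 * a) \<in> P12"
  then show "b > a + 1/2"
    using P12_mono[of a b "2 * a" "a + 1/2"] Clausen_not_mem_P12[OF assms] by force
next
  assume "b > a + 1/2"
  then show "(a, b, 2 * a) \<in> P12"
    using assms hyp1F2_Clausen_nonneg by (intro mem_P12_if_raised[where b = "a + 1/2"]) auto
qed

lemma mem_P12_half_c_iff:
  assumes "a > 0"
  shows "(a, a + 1/2, c) \<in> P12 \<longleftrightarrow> c > 2 * a"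
proof
  assume "(a, a + 1/2, c) \<in> P12"
  then have "(a, c, a + 1/2) \<in> P12"
    by (simp add: P12_commute)
  then show "c > 2 * a"
    using P12_mono[of a c "a + 1/2" "2 * a"] Clausen_not_mem_P12[OF assms] P12_commute by force
next
  assume "c > 2 * a"
  then have "(a, c, a + 1/2) \<in> P12"
    using assms hyp1F2_Clausen_nonneg
    by (intro mem_P12_if_raised[where b = "2 * a"]) (auto simp: hyp1F2_commute[of a "2 * a"])
  then show "(a, a + 1/2, c) \<in> P12"
    by (simp add: P12_commute)
qed

lemma mem_P12_if_ge:
  assumes "a > 0" "b \<ge> a + 1/2" "c \<ge> 2 * a" "b + c > 3 * a + 1/2"
  shows "(a, b, c) \<in> P12"
proof (cases "b > a + 1/2")
  case True
  then have "(a, 2 * a, b) \<in> P12"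
    using mem_P12_b_2a_iff[OF \<open>a > 0\<close>] P12_commute by blast
  then show ?thesis
    using P12_mono[of a "2 * a" b c] assms(3) P12_commute by blast
next
  case False
  then have "(a, a + 1/2, c) \<in> P12"
    using assms mem_P12_half_c_iff[OF \<open>a > 0\<close>] by simp
  then show ?thesis
    using P12_mono assms(2) by blast
qed

lemma hyp1F2_raise_b_Bessel_integral:
  assumes "a > 0" "\<delta> > 0"
  shows "hyp1F2 a (a + 1/2 + \<delta>) (2 * a) x = 2 / Beta \<delta> (a + 1/2) *
    (LBINT t=0..1. (nBesselJ (a - 1/2) (x * t / 2))^2 * (1 - t^2) powr (\<delta> - 1) * t powr (2 * a))"
proof -
  have "2 * (a + 1/2) - 1 = 2 * a"
    by simp
  then have integrand: "hyp1F2 a (a + 1/2) (2 * a) (x * t) * (1 - t^2) powr (\<delta> - 1) * t powr (2 * (a + 1/2) - 1)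
      = (nBesselJ (a - 1/2) (x * t / 2))^2 * (1 - t^2) powr (\<delta> - 1) * t powr (2 * a)" for t
    by (simp only: hyp1F2_eq_nBesselJ_sq[OF \<open>a > 0\<close>])
  have "(LBINT t=0..1. (nBesselJ (a - 1/2) (x * t / 2))^2 * (1 - t^2) powr (\<delta> - 1) * t powr (2 * a))
      = Beta (a + 1/2) \<delta> / 2 * hyp1F2 a (a + 1/2 + \<delta>) (2 * a) x"
    using hyp1F2_raise_LBINT[of a "a + 1/2" "2 * a" \<delta> x] assms unfolding integrand by simp
  then show ?thesis
    using Beta_pos_real[of "a + 1/2" \<delta>] assms by (simp add: Beta_commute[of \<delta>] field_simps)
qed

lemma hyp1F2_raise_c_Bessel_integral:
  assumes "a > 0" "\<epsilon> > 0"
  shows "hyp1F2 a (a + 1/2) (2 * a + \<epsilon>) x = 2 / Beta \<epsilon> (2 * a) *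
    (LBINT t=0..1. (nBesselJ (a - 1/2) (x * t / 2))^2 * (1 - t^2) powr (\<epsilon> - 1) * t powr (4 * a - 1))"
proof -
  have "2 * (2 * a) - 1 = 4 * a - 1"
    by simp
  then have integrand: "hyp1F2 a (2 * a) (a + 1/2) (x * t) * (1 - t^2) powr (\<epsilon> - 1) * t powr (2 * (2 * a) - 1)
      = (nBesselJ (a - 1/2) (x * t / 2))^2 * (1 - t^2) powr (\<epsilon> - 1) * t powr (4 * a - 1)" for t
    by (simp only: hyp1F2_commute[of a "2 * a"] hyp1F2_eq_nBesselJ_sq[OF \<open>a > 0\<close>])
  have "(LBINT t=0..1. (nBesselJ (a - 1/2) (x * t / 2))^2 * (1 - t^2) powr (\<epsilon> - 1) * t powr (4 * a - 1))
      = Beta (2 * a) \<epsilon> / 2 * hyp1F2 a (2 * a + \<epsilon>) (a + 1/2) x"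
    using hyp1F2_raise_LBINT[of a "2 * a" "a + 1/2" \<epsilon> x] assms unfolding integrand by simp
  then show ?thesis
    unfolding hyp1F2_commute[of a "a + 1/2" "2 * a + \<epsilon>"]
    using Beta_pos_real[of "2 * a" \<epsilon>] assms by (simp add: Beta_commute[of \<epsilon>] field_simps)
qed

theorem theorem2:
  fixes a :: real
  assumes "a > 0"
  shows "(\<forall>b c. ((b \<ge> a + 1/2 \<and> c \<ge> 2*a) \<or> (b \<ge> 2*a \<and> c \<ge> a + 1/2))
                 \<and> b + c > 3*a + 1/2 \<longrightarrow> (a, b, c) \<in> P12)
     \<and> (\<forall>b. (a, b, 2*a) \<in> P12 \<longleftrightarrow> b > a + 1/2)
     \<and> (\<forall>\<delta>>0. \<forall>x>0.
          hyp1F2 a (a + 1/2 + \<delta>) (2*a) x =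
            2 / Beta \<delta> (a + 1/2) *
            (LBINT t=0..1. (nBesselJ (a - 1/2) (x*t/2))^2 * (1 - t^2) powr (\<delta> - 1) * t powr (2*a))
          \<and> hyp1F2 a (a + 1/2 + \<delta>) (2*a) x > 0)
     \<and> (\<forall>c. (a, a + 1/2, c) \<in> P12 \<longleftrightarrow> c > 2*a)
     \<and> (\<forall>\<epsilon>>0. \<forall>x>0.
          hyp1F2 a (a + 1/2) (2*a + \<epsilon>) x =
            2 / Beta \<epsilon> (2*a) *
            (LBINT t=0..1. (nBesselJ (a - 1/2) (x*t/2))^2 * (1 - t^2) powr (\<epsilon> - 1) * t powr (4*a - 1))
          \<and> hyp1F2 a (a + 1/2) (2*a + \<epsilon>) x > 0)"
proof (intro conjI allI impI)
  show "(a, b, c) \<in> P12"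
    if "((b \<ge> a + 1/2 \<and> c \<ge> 2*a) \<or> (b \<ge> 2*a \<and> c \<ge> a + 1/2)) \<and> b + c > 3*a + 1/2" for b c
    using that
  proof (elim conjE disjE)
    assume "b \<ge> 2*a" "c \<ge> a + 1/2" "b + c > 3*a + 1/2"
    then have "(a, c, b) \<in> P12"
      by (intro mem_P12_if_ge assms) auto
    then show ?thesis
      by (simp add: P12_commute)
  qed (rule mem_P12_if_ge[OF assms]; simp)
  show "(a, b, 2*a) \<in> P12 \<longleftrightarrow> b > a + 1/2" for b
    by (rule mem_P12_b_2a_iff[OF assms])
  show "(a, a + 1/2, c) \<in> P12 \<longleftrightarrow> c > 2*a" for c
    by (rule mem_P12_half_c_iff[OF assms])
  show "hyp1F2 a (a + 1/2 + \<delta>) (2*a) x =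
      2 / Beta \<delta> (a + 1/2) *
      (LBINT t=0..1. (nBesselJ (a - 1/2) (x*t/2))^2 * (1 - t^2) powr (\<delta> - 1) * t powr (2*a))"
    if "\<delta> > 0" for \<delta> x
    by (rule hyp1F2_raise_b_Bessel_integral[OF assms that])
  show "hyp1F2 a (a + 1/2 + \<delta>) (2*a) x > 0" if "\<delta> > 0" "x > 0" for \<delta> x
    using mem_P12_b_2a_iff[OF assms, of "a + 1/2 + \<delta>"] that unfolding P12_def by simp
  show "hyp1F2 a (a + 1/2) (2*a + \<epsilon>) x =
      2 / Beta \<epsilon> (2*a) *
      (LBINT t=0..1. (nBesselJ (a - 1/2) (x*t/2))^2 * (1 - t^2) powr (\<epsilon> - 1) * t powr (4*a - 1))"
    if "\<epsilon> > 0" for \<epsilon> x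
    by (rule hyp1F2_raise_c_Bessel_integral[OF assms that])
  show "hyp1F2 a (a + 1/2) (2*a + \<epsilon>) x > 0" if "\<epsilon> > 0" "x > 0" for \<epsilon> x
    using mem_P12_half_c_iff[OF assms, of "2*a + \<epsilon>"] that unfolding P12_def by simp
qed

end
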